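(* For every $n\geq 1$ and $a_1,\ldots,a_n\in A$, \[\sum_{k=0}^n(-1)^k\,S^t(a_1\cdots a_k)*S^{1-t}(a_n a_{n-1}\cdots a_{k+1})=0\] in $\mathfrak{h}^1[t]$ (empty products being the empty word $1$).
   Context: Let $\mathfrak{A}$ be a commutative $\mathbb{Q}$-algebra, $A$ a set of letters, and $\mathfrak{h}^1$ the non-commutative polynomial algebra over $\mathfrak{A}$ in the letters of $A$ (the free $\mathfrak{A}$-module on words, i.e. finite sequences of letters including the empty word $1$, with concatenation product). Let $\mathfrak{z}\subset\mathfrak{h}^1$ be the $\mathfrak{A}$-submodule spanned by $A$, and assume $\mathfrak{z}$ carries a commutative associative (not necessarily unital) $\mathfrak{A}$-bilinear product $\circ\colon\mathfrak{z}\times\mathfrak{z}\to\mathfrak{z}$. This is extended to an action of $\mathfrak{z}$ on $\mathfrak{h}^1$ by $a\circ 1=0$ and $a\circ(bw)=(a\circ b)w$ for $a,b\in A$ and words $w$, extended $\mathfrak{A}$-bilinearly. Let $t$ be an indeterminate, $\mathfrak{h}^1[t]=\mathfrak{h}^1\otimes_{\mathbb{Q}}\mathbb{Q}[t]$, with all structures extended $\mathfrak{A}[t]$-linearly. Define the $\mathfrak{A}[t]$-linear operator $S^t$ on $\mathfrak{h}^1[t]$ by $S^t(1)=1$ and $S^t(aw)=aS^t(w)+t\,a\circ S^t(w)$ for $a\in A$ and words $w$; $S^{1-t}$ is obtained by substituting $1-t$ for $t$. The harmonic product $*$ is the $\mathfrak{A}[t]$-bilinear product on $\mathfrak{h}^1[t]$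 given by $1*w=w*1=w$ and $(aw)*(bw')=a(w*bw')+b(aw*w')+(a\circ b)(w*w')$ for $a,b\in A$ and words $w,w'$. *)

theory Defs
  imports "HOL-Library.Poly_Mapping" "HOL-Computational_Algebra.Polynomial"
begin

text \<open>Words over the alphabet 'a are lists; the algebra
h^1[t] over A[t] is (finitely supported maps from words to 'r poly).\<close>

definition smul :: "'v::comm_ring_1 \<Rightarrow> ('k \<Rightarrow>\<^sub>0 'v) \<Rightarrow> ('k \<Rightarrow>\<^sub>0 'v)" where
  "smul c x = Poly_Mapping.map (\<lambda>v. c * v) x"

definition lin :: "('k \<Rightarrow> ('m \<Rightarrow>\<^sub>0 'v::comm_ring_1)) \<Rightarrow> ('k \<Rightarrow>\<^sub>0 'v) \<Rightarrow> ('m \<Rightarrow>\<^sub>0 'v)" where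
  "lin f x = (\<Sum>k\<in>Poly_Mapping.keys x. smul (Poly_Mapping.lookup x k) (f k))"

text \<open>The product \<circ> on z is given by structure constants: circ a b \<in> z for letters a b.\<close>
fun circ_word :: "('a \<Rightarrow> 'a \<Rightarrow> ('a \<Rightarrow>\<^sub>0 'r::comm_ring_1)) \<Rightarrow> 'a \<Rightarrow> 'a list \<Rightarrow> ('a list \<Rightarrow>\<^sub>0 'r poly)" where
  "circ_word c a [] = 0"
| "circ_word c a (b # w) = (\<Sum>d\<in>Poly_Mapping.keys (c a b). Poly_Mapping.single (d # w) [:Poly_Mapping.lookup (c a b) d:])"

definition lcons :: "'a \<Rightarrow> ('a list \<Rightarrow>\<^sub>0 'r::comm_ring_1 poly) \<Rightarrow> ('a list \<Rightarrow>\<^sub>0 'r poly)" where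
  "lcons a x = lin (\<lambda>w. Poly_Mapping.single (a # w) 1) x"

text \<open>S^s on words, for a scalar s \<in> A[t]: S^s(1) = 1, S^s(a w) = a S^s(w) + s (a \<circ> S^s(w)).
S^t is Sop c [:0,1:] and S^(1-t) is Sop c [:1,-1:].\<close>
fun Sop :: "('a \<Rightarrow> 'a \<Rightarrow> ('a \<Rightarrow>\<^sub>0 'r::comm_ring_1)) \<Rightarrow> 'r poly \<Rightarrow> 'a list \<Rightarrow> ('a list \<Rightarrow>\<^sub>0 'r poly)" where
  "Sop c s [] = Poly_Mapping.single [] 1"
| "Sop c s (a # w) = lcons a (Sop c s w) + smul s (lin (circ_word c a) (Sop c s w))"

fun harm_word :: "('a \<Rightarrow> 'a \<Rightarrow> ('a \<Rightarrow>\<^sub>0 'r::comm_ring_1)) \<Rightarrow> 'a list \<Rightarrow> 'a list \<Rightarrow> ('a list \<Rightarrow>\<^sub>0 'r poly)" where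
  "harm_word c [] w = Poly_Mapping.single w 1"
| "harm_word c (a # v) [] = Poly_Mapping.single (a # v) 1"
| "harm_word c (a # v) (b # w) =
     lcons a (harm_word c v (b # w)) + lcons b (harm_word c (a # v) w)
     + (\<Sum>d\<in>Poly_Mapping.keys (c a b). smul [:Poly_Mapping.lookup (c a b) d:] (lcons d (harm_word c v w)))"

definition harm :: "('a \<Rightarrow> 'a \<Rightarrow> ('a \<Rightarrow>\<^sub>0 'r::comm_ring_1)) \<Rightarrow> ('a list \<Rightarrow>\<^sub>0 'r poly) \<Rightarrow> ('a list \<Rightarrow>\<^sub>0 'r poly) \<Rightarrow> ('a list \<Rightarrow>\<^sub>0 'r poly)" where
  "harm c x y = lin (\<lambda>v. lin (\<lambda>w. harm_word c v w) y) x"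

end

theory Submission
  imports Defs
begin

(* Write T = S^s and U = S^s' for scalars s, s' with s + s' = 1, and for a word w of length n
   put H(w) = sum_k (-1)^k T(w_1..w_k) * U(w_n..w_(k+1)).  We show H(w) = 0 for w nonempty,
   by strong induction on n; the theorem is the case s = t, s' = 1 - t.

   Expanding by first letters, T(w_1..w_k) = sum_p s^(p-1) [w_1..w_p] T(w_(p+1)..w_k), where
   [v] is the circ-product of the letters of v, and likewise U(w_n..w_(k+1)) =
   sum_q s'^(n-1-q) [w_(q+1)..w_n] U(w_q..w_(k+1)).  The harmonic product of two such
   expansions splits into a "left", a "right" and a "mixed" part.  Summing each part over k with
   signs, the inner sums are again alternating sums H of proper segments of w, which vanish by
   induction unless the segment is empty.  What survives is gamma [w] 1 with
   gamma = (-1)^n s^(n-1) + s'^(n-1) + sum_(0<p<n) (-1)^p s^(p-1) s'^(n-1-p), which is 0 as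
   s + s' = 1. *)


section \<open>Linear combinations\<close>

lemma lookup_smul[simp]: "Poly_Mapping.lookup (smul c x) k = c * Poly_Mapping.lookup x k"
  unfolding smul_def by (simp add: map.rep_eq when_def)

lemma smul_zero[simp]: "smul c 0 = 0"
  by (rule poly_mapping_eqI) simp

lemma smul_zero_left[simp]: "smul 0 x = 0"
  by (rule poly_mapping_eqI) simp

lemma smul_one[simp]: "smul 1 x = x"
  by (rule poly_mapping_eqI) simp

lemma smul_add: "smul c (x + y) = smul c x + smul c y"
  by (rule poly_mapping_eqI) (simp add: lookup_add algebra_simps)

lemma smul_add_left: "smul (a + b) x = smul a x + smul b x"
  by (rule poly_mapping_eqI) (simp add: lookup_add algebra_simps)

lemma smul_smul[simp]: "smul a (smul b x) = smul (a * b) x"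
  by (rule poly_mapping_eqI) (simp add: algebra_simps)

lemma smul_sum: "smul c (sum f S) = (\<Sum>i\<in>S. smul c (f i))"
  by (rule poly_mapping_eqI) (simp add: lookup_sum sum_distrib_left)

lemma smul_sum_left: "smul (sum f S) x = (\<Sum>i\<in>S. smul (f i) x)"
  by (rule poly_mapping_eqI) (simp add: lookup_sum sum_distrib_right)

lemma smul_single: "smul c (Poly_Mapping.single k v) = Poly_Mapping.single k (c * v)"
  by (rule poly_mapping_eqI) (simp add: lookup_single when_def)

lemma lin_superset:
  assumes "finite S" "Poly_Mapping.keys x \<subseteq> S"
  shows "lin f x = (\<Sum>k\<in>S. smul (Poly_Mapping.lookup x k) (f k))"
  unfolding lin_def
  by (rule sum.mono_neutral_left) (use assms in \<open>auto simp: in_keys_iff\<close>)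

lemma lin_zero[simp]: "lin f 0 = 0"
  by (simp add: lin_def)

lemma lin_add: "lin f (x + y) = lin f x + lin f y"
proof -
  let ?S = "Poly_Mapping.keys x \<union> Poly_Mapping.keys y"
  have "lin f (x + y) = (\<Sum>k\<in>?S. smul (Poly_Mapping.lookup (x + y) k) (f k))"
    by (rule lin_superset) (auto dest: keys_add[THEN subsetD])
  also have "\<dots> = (\<Sum>k\<in>?S. smul (Poly_Mapping.lookup x k) (f k))
                + (\<Sum>k\<in>?S. smul (Poly_Mapping.lookup y k) (f k))"
    by (simp add: lookup_add smul_add_left sum.distrib)
  also have "\<dots> = lin f x + lin f y"
    by (simp add: lin_superset[symmetric])
  finally show ?thesis .
qed

lemma lin_smul: "lin f (smul c x) = smul c (lin f x)"
proof -
  have "lin f (smul c x) =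
      (\<Sum>k\<in>Poly_Mapping.keys x. smul (Poly_Mapping.lookup (smul c x) k) (f k))"
    by (rule lin_superset) (auto simp: in_keys_iff)
  thus ?thesis by (simp add: lin_def smul_sum)
qed

lemma lin_single: "lin f (Poly_Mapping.single k v) = smul v (f k)"
  by (subst lin_superset[of "{k}"]) (auto simp: lookup_single)

lemma lin_sum: "lin f (sum g S) = (\<Sum>i\<in>S. lin f (g i))"
  by (induction S rule: infinite_finite_induct) (auto simp: lin_add)

lemma lin_fadd: "lin (\<lambda>k. f k + g k) x = lin f x + lin g x"
  by (simp add: lin_def smul_add sum.distrib)

lemma lin_fsmul: "lin (\<lambda>k. smul c (f k)) x = smul c (lin f x)"
  by (simp add: lin_def smul_sum mult.commute)

lemma lin_id: "lin (\<lambda>k. Poly_Mapping.single k 1) x = x"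
  by (rule poly_mapping_eqI)
    (simp add: lin_def smul_single lookup_sum lookup_single when_def in_keys_iff)

lemma lin_swap: "lin (\<lambda>d. lin (\<lambda>e. F d e) y) x = lin (\<lambda>e. lin (\<lambda>d. F d e) x) y"
  by (simp add: lin_def smul_sum sum.swap[of _ "Poly_Mapping.keys x"] mult.commute)

text \<open>Linear maps between free modules; a linear map is determined by its values on the basis,
  which is how most identities below are reduced to words.\<close>
definition linear_map :: "(('k \<Rightarrow>\<^sub>0 'v::comm_ring_1) \<Rightarrow> ('m \<Rightarrow>\<^sub>0 'v)) \<Rightarrow> bool" where
  "linear_map L \<longleftrightarrow> (\<forall>x y. L (x + y) = L x + L y) \<and> (\<forall>c x. L (smul c x) = smul c (L x))"

lemma linear_map_zero: "linear_map L \<Longrightarrow> L 0 = 0"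
  unfolding linear_map_def by (metis smul_zero_left)

lemma linear_map_sum: "linear_map L \<Longrightarrow> L (sum f S) = (\<Sum>i\<in>S. L (f i))"
  by (induction S rule: infinite_finite_induct) (auto simp: linear_map_zero linear_map_def)

lemma linear_map_lin_comp: "linear_map L \<Longrightarrow> L (lin f x) = lin (\<lambda>k. L (f k)) x"
  unfolding lin_def by (simp add: linear_map_sum) (simp add: linear_map_def)

lemma linear_map_lin: "linear_map (lin f)"
  by (simp add: linear_map_def lin_add lin_smul)

lemma linear_map_comp: "linear_map L1 \<Longrightarrow> linear_map L2 \<Longrightarrow> linear_map (\<lambda>x. L1 (L2 x))"
  by (simp add: linear_map_def)

lemma linear_map_plus: "linear_map L1 \<Longrightarrow> linear_map L2 \<Longrightarrow> linear_map (\<lambda>x. L1 x + L2 x)"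
  by (simp add: linear_map_def smul_add algebra_simps)

lemma linear_map_ext:
  assumes "linear_map L1" "linear_map L2"
    and "\<And>k. L1 (Poly_Mapping.single k 1) = L2 (Poly_Mapping.single k 1)"
  shows "L1 x = L2 x"
proof -
  have "L1 x = L1 (lin (\<lambda>k. Poly_Mapping.single k 1) x)" by (simp add: lin_id)
  also have "\<dots> = L2 (lin (\<lambda>k. Poly_Mapping.single k 1) x)"
    by (simp add: linear_map_lin_comp assms)
  finally show ?thesis by (simp add: lin_id)
qed


section \<open>Prepending elements of z and the action of z\<close>

lemma linear_map_lcons: "linear_map (lcons a)"
  unfolding lcons_def[abs_def] by (rule linear_map_lin)

lemma lcons_single: "lcons a (Poly_Mapping.single w 1) = Poly_Mapping.single (a # w) 1"
  by (simp add: lcons_def lin_single)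

definition const_coeffs :: "('a \<Rightarrow>\<^sub>0 'r::comm_ring_1) \<Rightarrow> ('a \<Rightarrow>\<^sub>0 'r poly)" where
  "const_coeffs z = Poly_Mapping.map (\<lambda>r. [:r:]) z"

lemma lookup_const_coeffs[simp]:
  "Poly_Mapping.lookup (const_coeffs z) d = [:Poly_Mapping.lookup z d:]"
  unfolding const_coeffs_def by (simp add: map.rep_eq when_def)

lemma keys_const_coeffs[simp]: "Poly_Mapping.keys (const_coeffs z) = Poly_Mapping.keys z"
  by (auto simp: in_keys_iff)

definition zcons :: "('a \<Rightarrow>\<^sub>0 'r::comm_ring_1) \<Rightarrow> ('a list \<Rightarrow>\<^sub>0 'r poly) \<Rightarrow> ('a list \<Rightarrow>\<^sub>0 'r poly)"
  where "zcons z X = lin (\<lambda>d. lcons d X) (const_coeffs z)"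

lemma zcons_explicit:
  "zcons z X = (\<Sum>d\<in>Poly_Mapping.keys z. smul [:Poly_Mapping.lookup z d:] (lcons d X))"
  by (simp add: zcons_def lin_def)

lemma linear_map_zcons: "linear_map (zcons z)"
  unfolding zcons_def linear_map_def
  by (simp add: linear_map_lcons[unfolded linear_map_def] lin_fadd lin_fsmul)

lemma zcons_smul: "zcons z (smul a x) = smul a (zcons z x)"
  using linear_map_zcons[unfolded linear_map_def] by blast

lemma zcons_sum: "zcons z (sum f S) = (\<Sum>i\<in>S. zcons z (f i))"
  using linear_map_sum[OF linear_map_zcons] .

lemma zcons_zero[simp]: "zcons z 0 = 0"
  using linear_map_zero[OF linear_map_zcons] .

lemma zcons_letter:
  fixes X :: "'a list \<Rightarrow>\<^sub>0 'r::comm_ring_1 poly"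
  shows "zcons (Poly_Mapping.single a 1) X = lcons a X"
proof -
  have "const_coeffs (Poly_Mapping.single a (1::'r)) = Poly_Mapping.single a 1"
    by (rule poly_mapping_eqI) (simp add: lookup_single when_def)
  thus ?thesis unfolding zcons_def by (simp add: lin_single)
qed

lemma zcons_lin: "zcons (lin g z) X = lin (\<lambda>d. zcons (g d) X) (const_coeffs z)"
proof -
  have add: "zcons (x + y) X = zcons x X + zcons y X" for x y
  proof -
    have "const_coeffs (x + y) = const_coeffs x + const_coeffs y"
      by (rule poly_mapping_eqI) (simp add: lookup_add)
    thus ?thesis by (simp add: zcons_def lin_add)
  qed
  have zero: "zcons 0 X = 0"
    by (simp add: zcons_def lin_def)
  have zsum: "zcons (sum f S) X = (\<Sum>i\<in>S. zcons (f i) X)" for f S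
    by (induction S rule: infinite_finite_induct) (auto simp: add zero)
  have zsmul: "zcons (smul r x) X = smul [:r:] (zcons x X)" for r x
  proof -
    have "const_coeffs (smul r x) = smul [:r:] (const_coeffs x)"
      by (rule poly_mapping_eqI) simp
    thus ?thesis by (simp add: zcons_def lin_smul)
  qed
  show ?thesis by (simp add: lin_def[of g] zsum zsmul) (simp add: lin_def)
qed

abbreviation circ_act :: "('a \<Rightarrow> 'a \<Rightarrow> ('a \<Rightarrow>\<^sub>0 'r::comm_ring_1)) \<Rightarrow> 'a
    \<Rightarrow> ('a list \<Rightarrow>\<^sub>0 'r poly) \<Rightarrow> ('a list \<Rightarrow>\<^sub>0 'r poly)"
  where "circ_act c a \<equiv> lin (circ_word c a)"

text \<open>a \<circ> (z X) = (a \<circ> z) X: the action only touches the first letter.\<close>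
lemma circ_act_zcons: "circ_act c a (zcons z X) = zcons (lin (c a) z) X"
proof -
  have circ_act_lcons: "circ_act c a (lcons d X) = zcons (c a d) X" for d
  proof (rule linear_map_ext[OF linear_map_comp[OF linear_map_lin linear_map_lcons] linear_map_zcons])
    fix w
    show "circ_act c a (lcons d (Poly_Mapping.single w 1)) = zcons (c a d) (Poly_Mapping.single w 1)"
      by (simp add: lcons_single lin_single zcons_explicit smul_single)
  qed
  show ?thesis
    by (simp add: zcons_def[of z] linear_map_lin_comp[OF linear_map_lin] circ_act_lcons zcons_lin)
qed


section \<open>The product on z and contractions of words\<close>

definition zmul :: "('a \<Rightarrow> 'a \<Rightarrow> ('a \<Rightarrow>\<^sub>0 'r::comm_ring_1)) \<Rightarrow> ('a \<Rightarrow>\<^sub>0 'r) \<Rightarrow> ('a \<Rightarrow>\<^sub>0 'r)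
    \<Rightarrow> ('a \<Rightarrow>\<^sub>0 'r)"
  where "zmul c z z' = lin (\<lambda>d. lin (c d) z') z"

lemma linear_map_zmul_right: "linear_map (zmul c x)"
  unfolding zmul_def linear_map_def by (simp add: lin_add lin_smul lin_fadd lin_fsmul)

lemma linear_map_zmul_left: "linear_map (\<lambda>x. zmul c x y)"
  unfolding zmul_def[abs_def] by (rule linear_map_lin)

lemma zmul_letter: "zmul c (Poly_Mapping.single a 1) z = lin (c a) z"
  by (simp add: zmul_def lin_single)

lemma zmul_letters: "zmul c (Poly_Mapping.single a 1) (Poly_Mapping.single b 1) = c a b"
  by (simp add: zmul_letter lin_single)

lemma zmul_comm:
  assumes comm: "\<And>a b. c a b = c b a"
  shows "zmul c x y = zmul c y x"
proof -
  have "zmul c (Poly_Mapping.single a 1) y = zmul c y (Poly_Mapping.single a 1)" for a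
    by (rule linear_map_ext[OF linear_map_zmul_right linear_map_zmul_left])
      (simp add: zmul_letters comm)
  thus ?thesis by (rule linear_map_ext[OF linear_map_zmul_left linear_map_zmul_right])
qed

lemma zmul_assoc:
  assumes assoc: "\<And>a b e. lin (\<lambda>d. c d e) (c a b) = lin (\<lambda>d. c a d) (c b e)"
  shows "zmul c (zmul c x y) z = zmul c x (zmul c y z)"
proof -
  have letters: "zmul c (zmul c (Poly_Mapping.single a 1) (Poly_Mapping.single b 1)) z
     = zmul c (Poly_Mapping.single a 1) (zmul c (Poly_Mapping.single b 1) z)" for a b
  proof (rule linear_map_ext[OF linear_map_zmul_right
        linear_map_comp[OF linear_map_zmul_right linear_map_zmul_right]])
    fix e
    have "zmul c (c a b) (Poly_Mapping.single e 1) = lin (\<lambda>d. c d e) (c a b)"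
      by (simp add: zmul_def lin_single)
    moreover have "zmul c (Poly_Mapping.single a 1) (c b e) = lin (\<lambda>d. c a d) (c b e)"
      by (simp add: zmul_letter)
    ultimately show "zmul c (zmul c (Poly_Mapping.single a 1) (Poly_Mapping.single b 1))
        (Poly_Mapping.single e 1) = zmul c (Poly_Mapping.single a 1)
        (zmul c (Poly_Mapping.single b 1) (Poly_Mapping.single e 1))"
      by (simp add: zmul_letters assoc)
  qed
  have "zmul c (zmul c (Poly_Mapping.single a 1) y) z
     = zmul c (Poly_Mapping.single a 1) (zmul c y z)" for a
    by (rule linear_map_ext[OF linear_map_comp[OF linear_map_zmul_left linear_map_zmul_right]
          linear_map_comp[OF linear_map_zmul_right linear_map_zmul_left]]) (rule letters)
  thus ?thesis
    by (rule linear_map_ext[OF linear_map_comp[OF linear_map_zmul_left linear_map_zmul_left]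
          linear_map_zmul_left])
qed

fun contract :: "('a \<Rightarrow> 'a \<Rightarrow> ('a \<Rightarrow>\<^sub>0 'r::comm_ring_1)) \<Rightarrow> 'a list \<Rightarrow> ('a \<Rightarrow>\<^sub>0 'r)" where
  "contract c [] = 0"
| "contract c [a] = Poly_Mapping.single a 1"
| "contract c (a # b # w) = zmul c (Poly_Mapping.single a 1) (contract c (b # w))"

lemma contract_cons:
  "v \<noteq> [] \<Longrightarrow> contract c (a # v) = zmul c (Poly_Mapping.single a 1) (contract c v)"
  by (cases v) auto

lemma contract_append:
  assumes assoc: "\<And>a b e. lin (\<lambda>d. c d e) (c a b) = lin (\<lambda>d. c a d) (c b e)"
    and "x \<noteq> []" "y \<noteq> []"
  shows "contract c (x @ y) = zmul c (contract c x) (contract c y)"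
  using \<open>x \<noteq> []\<close>
proof (induction x)
  case (Cons a x)
  thus ?case using \<open>y \<noteq> []\<close>
    by (cases "x = []") (simp_all add: contract_cons zmul_assoc[OF assoc])
qed simp

text \<open>By commutativity and associativity the contraction does not see the order of letters.\<close>
lemma contract_rev:
  assumes comm: "\<And>a b. c a b = c b a"
    and assoc: "\<And>a b e. lin (\<lambda>d. c d e) (c a b) = lin (\<lambda>d. c a d) (c b e)"
  shows "contract c (rev w) = contract c w"
proof (induction w)
  case (Cons a w)
  show ?case
  proof (cases "w = []")
    case False
    have "contract c (rev (a # w)) = zmul c (contract c (rev w)) (contract c [a])"
      using False by (simp add: contract_append[OF assoc])
    also have "\<dots> = contract c (a # w)"
      using Cons False by (simp add: contract_cons zmul_comm[OF comm])
    finally show ?thesis .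
  qed simp
qed simp


section \<open>The harmonic product\<close>

lemma linear_map_harm_left: "linear_map (\<lambda>X. harm c X Y)"
  unfolding harm_def by (rule linear_map_lin)

lemma linear_map_harm_right: "linear_map (harm c X)"
  unfolding harm_def linear_map_def by (simp add: lin_add lin_smul lin_fadd lin_fsmul)

lemma harm_smul_left: "harm c (smul a x) Y = smul a (harm c x Y)"
  using linear_map_harm_left[unfolded linear_map_def] by blast

lemma harm_smul_right: "harm c X (smul a y) = smul a (harm c X y)"
  using linear_map_harm_right[unfolded linear_map_def] by blast

lemma harm_sum_left: "harm c (sum f S) Y = (\<Sum>i\<in>S. harm c (f i) Y)"
  using linear_map_sum[OF linear_map_harm_left] .

lemma harm_sum_right: "harm c X (sum f S) = (\<Sum>i\<in>S. harm c X (f i))"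
  using linear_map_sum[OF linear_map_harm_right] .

lemma harm_one_left: "harm c (Poly_Mapping.single [] 1) Y = Y"
proof -
  have "harm_word c [] = (\<lambda>w. Poly_Mapping.single w 1)" by auto
  thus ?thesis by (simp add: harm_def lin_single lin_id)
qed

lemma harm_one_right: "harm c X (Poly_Mapping.single [] 1) = X"
proof -
  have "harm_word c v [] = Poly_Mapping.single v 1" for v
    by (cases v) auto
  hence "harm c X (Poly_Mapping.single [] 1) = lin (\<lambda>v. Poly_Mapping.single v 1) X"
    by (simp add: harm_def lin_single)
  thus ?thesis by (simp add: lin_id)
qed

lemma harm_lcons:
  "harm c (lcons a X) (lcons b Y) =
     lcons a (harm c X (lcons b Y)) + lcons b (harm c (lcons a X) Y) + zcons (c a b) (harm c X Y)"
proof -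
  have words: "harm c (lcons a (Poly_Mapping.single v 1)) (lcons b Y) =
     lcons a (harm c (Poly_Mapping.single v 1) (lcons b Y))
     + lcons b (harm c (lcons a (Poly_Mapping.single v 1)) Y)
     + zcons (c a b) (harm c (Poly_Mapping.single v 1) Y)" for v
    by (rule linear_map_ext[OF linear_map_comp[OF linear_map_harm_right linear_map_lcons]])
      (intro linear_map_plus linear_map_comp[OF linear_map_lcons] linear_map_lcons
        linear_map_comp[OF linear_map_harm_right] linear_map_harm_right
        linear_map_comp[OF linear_map_zcons],
       simp add: lcons_single harm_def lin_single zcons_explicit)
  show ?thesis
    by (rule linear_map_ext[OF linear_map_comp[OF linear_map_harm_left linear_map_lcons]])
      (intro linear_map_plus linear_map_comp[OF linear_map_lcons] linear_map_lcons
        linear_map_comp[OF linear_map_harm_left] linear_map_harm_left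
        linear_map_comp[OF linear_map_zcons], rule words)
qed

lemma harm_zcons:
  "harm c (zcons z X) (zcons z' Y) =
     zcons z (harm c X (zcons z' Y)) + zcons z' (harm c (zcons z X) Y)
     + zcons (zmul c z z') (harm c X Y)"
proof -
  have "harm c (zcons z X) (zcons z' Y) =
     lin (\<lambda>d. lin (\<lambda>e. harm c (lcons d X) (lcons e Y)) (const_coeffs z')) (const_coeffs z)"
    unfolding zcons_def
    by (simp add: linear_map_lin_comp[OF linear_map_harm_left]
        linear_map_lin_comp[OF linear_map_harm_right] lin_swap[of _ "const_coeffs z"])
  also have "\<dots> = lin (\<lambda>d. lin (\<lambda>e. lcons d (harm c X (lcons e Y))) (const_coeffs z')) (const_coeffs z)
     + lin (\<lambda>e. lin (\<lambda>d. lcons e (harm c (lcons d X) Y)) (const_coeffs z)) (const_coeffs z')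
     + lin (\<lambda>d. lin (\<lambda>e. zcons (c d e) (harm c X Y)) (const_coeffs z')) (const_coeffs z)"
    by (simp add: harm_lcons lin_fadd lin_swap[of _ "const_coeffs z'"])
  also have "\<dots> = zcons z (harm c X (zcons z' Y)) + zcons z' (harm c (zcons z X) Y)
      + zcons (zmul c z z') (harm c X Y)"
    unfolding zcons_def zmul_def
    by (simp add: linear_map_lin_comp[OF linear_map_lcons] linear_map_lin_comp[OF linear_map_harm_left]
        linear_map_lin_comp[OF linear_map_harm_right] zcons_lin[unfolded zcons_def])
  finally show ?thesis .
qed

lemma harm_expand:
  assumes X: "X = (\<Sum>j\<in>J. smul (\<alpha> j) (zcons (z j) (Xs j)))"
    and Y: "Y = (\<Sum>i\<in>I. smul (\<beta> i) (zcons (z' i) (Ys i)))"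
  shows "harm c X Y = (\<Sum>j\<in>J. smul (\<alpha> j) (zcons (z j) (harm c (Xs j) Y)))
     + (\<Sum>i\<in>I. smul (\<beta> i) (zcons (z' i) (harm c X (Ys i))))
     + (\<Sum>j\<in>J. \<Sum>i\<in>I. smul (\<alpha> j * \<beta> i) (zcons (zmul c (z j) (z' i)) (harm c (Xs j) (Ys i))))"
proof -
  have "harm c X Y = (\<Sum>j\<in>J. \<Sum>i\<in>I. smul (\<alpha> j * \<beta> i)
      (harm c (zcons (z j) (Xs j)) (zcons (z' i) (Ys i))))"
    unfolding X Y
    by (simp add: harm_sum_left harm_sum_right harm_smul_left harm_smul_right smul_sum,
        subst sum.swap, simp add: mult.commute)
  also have "\<dots> = (\<Sum>j\<in>J. \<Sum>i\<in>I. smul (\<alpha> j * \<beta> i) (zcons (z j) (harm c (Xs j) (zcons (z' i) (Ys i)))))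
     + (\<Sum>j\<in>J. \<Sum>i\<in>I. smul (\<alpha> j * \<beta> i) (zcons (z' i) (harm c (zcons (z j) (Xs j)) (Ys i))))
     + (\<Sum>j\<in>J. \<Sum>i\<in>I. smul (\<alpha> j * \<beta> i) (zcons (zmul c (z j) (z' i)) (harm c (Xs j) (Ys i))))"
    by (simp add: harm_zcons smul_add sum.distrib)
  also have "(\<Sum>j\<in>J. \<Sum>i\<in>I. smul (\<alpha> j * \<beta> i) (zcons (z j) (harm c (Xs j) (zcons (z' i) (Ys i)))))
      = (\<Sum>j\<in>J. smul (\<alpha> j) (zcons (z j) (harm c (Xs j) Y)))"
    unfolding Y by (simp add: harm_sum_right harm_smul_right zcons_sum zcons_smul smul_sum mult.commute)
  also have "(\<Sum>j\<in>J. \<Sum>i\<in>I. smul (\<alpha> j * \<beta> i) (zcons (z' i) (harm c (zcons (z j) (Xs j)) (Ys i))))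
      = (\<Sum>i\<in>I. smul (\<beta> i) (zcons (z' i) (harm c X (Ys i))))"
    unfolding X by (subst sum.swap)
      (simp add: harm_sum_left harm_smul_left zcons_sum zcons_smul smul_sum mult.commute)
  finally show ?thesis .
qed


section \<open>First-letter expansions of S^s\<close>

text \<open>S^s(v) = sum_p s^(p-1) [v_1 ... v_p] S^s(v_(p+1) ... v_m): unfolding the recursion
  of S^s repeatedly contracts an initial segment of the word into one element of z.\<close>
lemma Sop_expand:
  assumes "v \<noteq> []"
  shows "Sop c s v = (\<Sum>p\<in>{1..length v}.
           smul (s ^ (p - 1)) (zcons (contract c (take p v)) (Sop c s (drop p v))))"
  using assms
proof (induction v)
  case (Cons a w)
  define f where "f p = smul (s ^ (p - 1))
      (zcons (contract c (take p (a # w))) (Sop c s (drop p (a # w))))" for p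
  have head: "lcons a (Sop c s w) = f 1"
    by (simp add: f_def zcons_letter)
  have tail: "smul s (circ_act c a (Sop c s w)) = (\<Sum>p\<in>{1..length w}. f (Suc p))"
  proof (cases "w = []")
    case True thus ?thesis by (simp add: lin_single)
  next
    case False
    have "smul s (circ_act c a (Sop c s w)) = (\<Sum>p\<in>{1..length w}. smul (s * s ^ (p - 1))
        (zcons (lin (c a) (contract c (take p w))) (Sop c s (drop p w))))"
      using False Cons.IH by (simp add: lin_sum lin_smul circ_act_zcons smul_sum)
    also have "\<dots> = (\<Sum>p\<in>{1..length w}. f (Suc p))"
    proof (intro sum.cong refl)
      fix p assume p: "p \<in> {1..length w}"
      hence "s * s ^ (p - 1) = s ^ p" by (cases p) auto
      moreover have "contract c (take (Suc p) (a # w)) = lin (c a) (contract c (take p w))"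
        using p False by (simp add: contract_cons zmul_letter)
      ultimately show "smul (s * s ^ (p - 1)) (zcons (lin (c a) (contract c (take p w)))
          (Sop c s (drop p w))) = f (Suc p)"
        by (simp add: f_def)
    qed
    finally show ?thesis .
  qed
  have "(\<Sum>p\<in>{1..length (a # w)}. f p) = f 1 + (\<Sum>p\<in>{Suc 1..Suc (length w)}. f p)"
    using sum.atLeast_Suc_atMost[of 1 "Suc (length w)" f] by simp
  also have "\<dots> = f 1 + (\<Sum>p\<in>{1..length w}. f (Suc p))"
    by (simp only: sum.shift_bounds_cl_Suc_ivl)
  finally show ?case using head tail by (simp add: f_def)
qed simp

text \<open>The corresponding expansion of S^s(w_n ... w_(k+1)), indexed by the position q where the
  contracted final segment of w begins; commutativity makes that segment's order irrelevant.\<close>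
lemma Sop_rev_drop_expand:
  assumes comm: "\<And>a b. c a b = c b a"
    and assoc: "\<And>a b e. lin (\<lambda>d. c d e) (c a b) = lin (\<lambda>d. c a d) (c b e)"
    and "k < length w"
  shows "Sop c s (rev (drop k w)) = (\<Sum>q\<in>{k..<length w}. smul (s ^ (length w - 1 - q))
           (zcons (contract c (drop q w)) (Sop c s (rev (drop k (take q w))))))"
proof -
  define n where "n = length w"
  have "Sop c s (rev (drop k w)) = (\<Sum>p\<in>{1..n - k}. smul (s ^ (p - 1))
      (zcons (contract c (take p (rev (drop k w)))) (Sop c s (drop p (rev (drop k w))))))"
    using Sop_expand[of "rev (drop k w)"] assms(3) by (simp add: n_def)
  also have "\<dots> = (\<Sum>q\<in>{k..<n}. smul (s ^ (n - 1 - q))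
      (zcons (contract c (drop q w)) (Sop c s (rev (drop k (take q w))))))"
  proof (rule sum.reindex_bij_witness[of _ "\<lambda>q. n - q" "\<lambda>p. n - p"])
    fix p assume p: "p \<in> {1..n - k}"
    have kp: "k + p \<le> n"
      using p by auto
    hence arith: "n - (k + p) + k = n - p"
      by simp
    hence "take p (rev (drop k w)) = rev (drop (n - p) w)"
      by (simp add: take_rev n_def)
    moreover have "drop p (rev (drop k w)) = rev (drop k (take (n - p) w))"
      using arith by (simp add: drop_rev take_drop n_def)
    ultimately show "smul (s ^ (n - 1 - (n - p))) (zcons (contract c (drop (n - p) w))
        (Sop c s (rev (drop k (take (n - p) w))))) = smul (s ^ (p - 1))
        (zcons (contract c (take p (rev (drop k w)))) (Sop c s (drop p (rev (drop k w)))))"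
      using p kp by (simp add: contract_rev[OF comm assoc] Suc_diff_Suc)
  qed auto
  finally show ?thesis by (simp add: n_def)
qed


section \<open>The alternating sum\<close>

abbreviation empty_word :: "'a list \<Rightarrow>\<^sub>0 'r::comm_ring_1 poly"
  where "empty_word \<equiv> Poly_Mapping.single [] 1"

definition alt_sum :: "('a \<Rightarrow> 'a \<Rightarrow> ('a \<Rightarrow>\<^sub>0 'r::comm_ring_1)) \<Rightarrow> 'r poly \<Rightarrow> 'r poly \<Rightarrow> 'a list
    \<Rightarrow> ('a list \<Rightarrow>\<^sub>0 'r poly)"
  where "alt_sum c s s' w = (\<Sum>k = 0..length w.
           smul ((-1) ^ k) (harm c (Sop c s (take k w)) (Sop c s' (rev (drop k w)))))"

lemma alt_sum_segment:
  assumes "a \<le> b" "b \<le> length w"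
  shows "(\<Sum>k\<in>{a..b}. smul ((-1) ^ k)
            (harm c (Sop c s (drop a (take k w))) (Sop c s' (rev (drop k (take b w))))))
         = smul ((-1) ^ a) (alt_sum c s s' (drop a (take b w)))"
proof -
  have "(\<Sum>k\<in>{a..b}. smul ((-1) ^ k)
            (harm c (Sop c s (drop a (take k w))) (Sop c s' (rev (drop k (take b w))))))
      = (\<Sum>m\<in>{0..b - a}. smul ((-1) ^ (a + m))
            (harm c (Sop c s (drop a (take (a + m) w))) (Sop c s' (rev (drop (a + m) (take b w))))))"
    using sum.atLeastAtMost_shift_0[OF assms(1)] by (simp add: add.commute)
  also have "\<dots> = smul ((-1) ^ a) (alt_sum c s s' (drop a (take b w)))"
    unfolding alt_sum_def smul_sum
    using assms by (intro sum.cong) (auto simp: power_add take_drop add.commute mult.commute)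
  finally show ?thesis .
qed

lemma smul_zcons_sum:
  "(\<Sum>k\<in>K. smul (\<beta> k) (smul \<alpha> (zcons z (h k)))) = smul \<alpha> (zcons z (\<Sum>k\<in>K. smul (\<beta> k) (h k)))"
  by (simp add: zcons_sum zcons_smul smul_sum mult.commute)

lemma sum_swap_lower:
  "(\<Sum>k\<in>{0..n::nat}. \<Sum>p\<in>{1..k}. f k p) = (\<Sum>p\<in>{1..n}. \<Sum>k\<in>{p..n}. f k p)"
proof -
  have "(\<Sum>k\<in>{0..n}. \<Sum>p\<in>{1..k}. f k p) = (\<Sum>k\<in>{0..n}. \<Sum>p\<in>{p. p \<in> {1..n} \<and> p \<le> k}. f k p)"
    by (intro sum.cong) auto
  also have "\<dots> = (\<Sum>p\<in>{1..n}. \<Sum>k\<in>{k. k \<in> {0..n} \<and> p \<le> k}. f k p)"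
    by (rule sum.swap_restrict) auto
  also have "\<dots> = (\<Sum>p\<in>{1..n}. \<Sum>k\<in>{p..n}. f k p)"
    by (intro sum.cong) auto
  finally show ?thesis .
qed

lemma sum_swap_upper:
  "(\<Sum>k\<in>{m..n::nat}. \<Sum>q\<in>{k..<n}. f k q) = (\<Sum>q\<in>{m..<n}. \<Sum>k\<in>{m..q}. f k q)"
proof -
  have "(\<Sum>k\<in>{m..n}. \<Sum>q\<in>{k..<n}. f k q) = (\<Sum>k\<in>{m..n}. \<Sum>q\<in>{q. q \<in> {m..<n} \<and> k \<le> q}. f k q)"
    by (intro sum.cong) auto
  also have "\<dots> = (\<Sum>q\<in>{m..<n}. \<Sum>k\<in>{k. k \<in> {m..n} \<and> k \<le> q}. f k q)"
    by (rule sum.swap_restrict) auto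
  also have "\<dots> = (\<Sum>q\<in>{m..<n}. \<Sum>k\<in>{m..q}. f k q)"
    by (intro sum.cong) auto
  finally show ?thesis .
qed

lemma alternating_power_sum:
  fixes s s' :: "'b::comm_ring_1"
  assumes "s + s' = 1"
  shows "(\<Sum>p\<in>{1..m}. (-1) ^ p * s ^ (p - 1) * s' ^ (m - p)) = (-s) ^ m - s' ^ m"
proof (cases m)
  case (Suc l)
  have "(\<Sum>p\<in>{1..m}. (-1) ^ p * s ^ (p - 1) * s' ^ (m - p))
      = (\<Sum>p\<in>{0..l}. (-1) ^ Suc p * s ^ p * s' ^ (l - p))"
    using sum.shift_bounds_cl_Suc_ivl[of "\<lambda>p. (-1) ^ p * s ^ (p - 1) * s' ^ (m - p)" 0 l] Suc
    by simp
  also have "\<dots> = - (\<Sum>p<Suc l. (-s) ^ p * s' ^ (l - p))"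
    by (simp add: sum_negf[symmetric] power_minus[of s] atLeast0AtMost lessThan_Suc_atMost)
  also have "\<dots> = (-s) ^ m - s' ^ m"
  proof -
    have "-s - s' = -1" using assms by (simp add: algebra_simps)
    thus ?thesis using diff_power_eq_sum[of "-s" l s'] Suc by simp
  qed
  finally show ?thesis .
qed simp

context
  fixes c :: "'a \<Rightarrow> 'a \<Rightarrow> ('a \<Rightarrow>\<^sub>0 'r::comm_ring_1)" and s s' :: "'r poly" and w :: "'a list"
  assumes comm: "\<And>a b. c a b = c b a"
    and assoc: "\<And>a b e. lin (\<lambda>d. c d e) (c a b) = lin (\<lambda>d. c a d) (c b e)"
begin

text \<open>The three parts of T(w_1 ... w_k) * U(w_n ... w_(k+1)) after expanding both factors: the
  first letter of a word in the product comes from the left factor, from the right factor,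
  or from both.\<close>
definition left_part :: "nat \<Rightarrow> ('a list \<Rightarrow>\<^sub>0 'r poly)" where
  "left_part k = (\<Sum>p\<in>{1..k}. smul (s ^ (p - 1)) (zcons (contract c (take p w))
      (harm c (Sop c s (drop p (take k w))) (Sop c s' (rev (drop k w))))))"

definition right_part :: "nat \<Rightarrow> ('a list \<Rightarrow>\<^sub>0 'r poly)" where
  "right_part k = (\<Sum>q\<in>{k..<length w}. smul (s' ^ (length w - 1 - q)) (zcons (contract c (drop q w))
      (harm c (Sop c s (take k w)) (Sop c s' (rev (drop k (take q w)))))))"

definition mixed_part :: "nat \<Rightarrow> ('a list \<Rightarrow>\<^sub>0 'r poly)" where
  "mixed_part k = (\<Sum>p\<in>{1..k}. \<Sum>q\<in>{k..<length w}. smul (s ^ (p - 1) * s' ^ (length w - 1 - q))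
      (zcons (zmul c (contract c (take p w)) (contract c (drop q w)))
        (harm c (Sop c s (drop p (take k w))) (Sop c s' (rev (drop k (take q w)))))))"

text \<open>The splitting is valid for every cut k, the extreme cuts having an empty factor.\<close>
lemma harm_split:
  assumes "w \<noteq> []" "k \<le> length w"
  shows "harm c (Sop c s (take k w)) (Sop c s' (rev (drop k w)))
         = left_part k + right_part k + mixed_part k"
proof -
  have T: "Sop c s (take k w) = (\<Sum>p\<in>{1..k}. smul (s ^ (p - 1))
             (zcons (contract c (take p w)) (Sop c s (drop p (take k w)))))" if "0 < k"
  proof -
    have "take k w \<noteq> []" using that assms by auto
    thus ?thesis using Sop_expand[of "take k w" c s] assms(2) by (simp add: min_absorb2)
  qed
  have U: "Sop c s' (rev (drop k w)) = (\<Sum>q\<in>{k..<length w}. smul (s' ^ (length w - 1 - q))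
             (zcons (contract c (drop q w)) (Sop c s' (rev (drop k (take q w))))))" if "k < length w"
    by (rule Sop_rev_drop_expand[OF comm assoc that])
  consider "k = 0" | "k = length w" | "0 < k" "k < length w"
    using assms by linarith
  thus ?thesis
  proof cases
    case 1
    hence "k < length w" using assms(1) by simp
    thus ?thesis using 1 U
      by (simp add: left_part_def right_part_def mixed_part_def harm_one_left)
  next
    case 2
    hence "0 < k" using assms(1) by simp
    thus ?thesis using 2 T
      by (simp add: left_part_def right_part_def mixed_part_def harm_one_right)
  next
    case 3
    show ?thesis unfolding left_part_def right_part_def mixed_part_def
      by (rule harm_expand[OF T U]) (use 3 in auto)
  qed
qed

text \<open>Summed with signs, each part collapses to alternating sums of proper segments of w,
  which by the induction hypothesis all vanish except for the empty segment; each surviving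
  term is a multiple of [w] 1.\<close>
context
  assumes nonempty: "w \<noteq> []"
    and IH: "\<And>v. length v < length w \<Longrightarrow> alt_sum c s s' v = (if v = [] then empty_word else 0)"
begin

lemma left_part_sum:
  "(\<Sum>k\<in>{0..length w}. smul ((-1) ^ k) (left_part k))
     = smul ((-1) ^ length w * s ^ (length w - 1)) (zcons (contract c w) empty_word)"
proof -
  define n where "n = length w"
  have n_pos: "1 \<le> n" using nonempty by (simp add: n_def Suc_le_eq)
  have "(\<Sum>k\<in>{0..n}. smul ((-1) ^ k) (left_part k)) = (\<Sum>p\<in>{1..n}. \<Sum>k\<in>{p..n}.
      smul ((-1) ^ k) (smul (s ^ (p - 1)) (zcons (contract c (take p w))
        (harm c (Sop c s (drop p (take k w))) (Sop c s' (rev (drop k w)))))))"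
    unfolding left_part_def smul_sum by (rule sum_swap_lower)
  also have "\<dots> = (\<Sum>p\<in>{1..n}. smul (s ^ (p - 1))
      (zcons (contract c (take p w)) (smul ((-1) ^ p) (alt_sum c s s' (drop p w)))))"
  proof (intro sum.cong refl)
    fix p assume "p \<in> {1..n}"
    hence "(\<Sum>k\<in>{p..n}. smul ((-1) ^ k)
        (harm c (Sop c s (drop p (take k w))) (Sop c s' (rev (drop k w)))))
        = smul ((-1) ^ p) (alt_sum c s s' (drop p w))"
      using alt_sum_segment[of p n w c s s'] by (simp add: n_def)
    thus "(\<Sum>k\<in>{p..n}. smul ((-1) ^ k) (smul (s ^ (p - 1)) (zcons (contract c (take p w))
        (harm c (Sop c s (drop p (take k w))) (Sop c s' (rev (drop k w)))))))
        = smul (s ^ (p - 1)) (zcons (contract c (take p w))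
          (smul ((-1) ^ p) (alt_sum c s s' (drop p w))))"
      by (simp only: smul_zcons_sum)
  qed
  also have "\<dots> = (\<Sum>p\<in>{1..n}. if p = n then smul ((-1) ^ n * s ^ (n - 1))
      (zcons (contract c w) empty_word) else 0)"
    using IH nonempty by (intro sum.cong refl) (auto simp: n_def zcons_smul mult.commute)
  finally show ?thesis
    using n_pos by (simp add: n_def)
qed

lemma right_part_sum:
  "(\<Sum>k\<in>{0..length w}. smul ((-1) ^ k) (right_part k))
     = smul (s' ^ (length w - 1)) (zcons (contract c w) empty_word)"
proof -
  define n where "n = length w"
  have "(\<Sum>k\<in>{0..n}. smul ((-1) ^ k) (right_part k)) = (\<Sum>q\<in>{0..<n}. \<Sum>k\<in>{0..q}.
      smul ((-1) ^ k) (smul (s' ^ (n - 1 - q)) (zcons (contract c (drop q w))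
        (harm c (Sop c s (take k w)) (Sop c s' (rev (drop k (take q w))))))))"
    unfolding right_part_def smul_sum n_def by (rule sum_swap_upper)
  also have "\<dots> = (\<Sum>q\<in>{0..<n}. smul (s' ^ (n - 1 - q))
      (zcons (contract c (drop q w)) (alt_sum c s s' (take q w))))"
  proof (intro sum.cong refl)
    fix q assume "q \<in> {0..<n}"
    hence "(\<Sum>k\<in>{0..q}. smul ((-1) ^ k)
        (harm c (Sop c s (take k w)) (Sop c s' (rev (drop k (take q w))))))
        = alt_sum c s s' (take q w)"
      using alt_sum_segment[of 0 q w c s s'] by (simp add: n_def)
    thus "(\<Sum>k\<in>{0..q}. smul ((-1) ^ k) (smul (s' ^ (n - 1 - q)) (zcons (contract c (drop q w))
        (harm c (Sop c s (take k w)) (Sop c s' (rev (drop k (take q w))))))))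
        = smul (s' ^ (n - 1 - q)) (zcons (contract c (drop q w)) (alt_sum c s s' (take q w)))"
      by (simp only: smul_zcons_sum)
  qed
  also have "\<dots> = (\<Sum>q\<in>{0..<n}. if q = 0 then smul (s' ^ (n - 1))
      (zcons (contract c w) empty_word) else 0)"
    using IH nonempty by (intro sum.cong refl) (auto simp: n_def)
  finally show ?thesis
    using nonempty by (simp add: n_def)
qed

lemma mixed_part_sum:
  "(\<Sum>k\<in>{0..length w}. smul ((-1) ^ k) (mixed_part k))
     = smul (\<Sum>p\<in>{1..length w - 1}. (-1) ^ p * s ^ (p - 1) * s' ^ (length w - 1 - p))
         (zcons (contract c w) empty_word)"
proof -
  define n where "n = length w"
  define \<alpha> where "\<alpha> p q = s ^ (p - 1) * s' ^ (n - 1 - q)" for p q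
  define z where "z p q = zmul c (contract c (take p w)) (contract c (drop q w))" for p q
  define h where "h p q k = harm c (Sop c s (drop p (take k w))) (Sop c s' (rev (drop k (take q w))))"
    for p q k
  have "(\<Sum>k\<in>{0..n}. smul ((-1) ^ k) (mixed_part k)) = (\<Sum>p\<in>{1..n}. \<Sum>k\<in>{p..n}. \<Sum>q\<in>{k..<n}.
      smul ((-1) ^ k) (smul (\<alpha> p q) (zcons (z p q) (h p q k))))"
    unfolding mixed_part_def smul_sum n_def \<alpha>_def z_def h_def by (rule sum_swap_lower)
  also have "\<dots> = (\<Sum>p\<in>{1..n}. \<Sum>q\<in>{p..<n}. \<Sum>k\<in>{p..q}.
      smul ((-1) ^ k) (smul (\<alpha> p q) (zcons (z p q) (h p q k))))"
    by (intro sum.cong refl sum_swap_upper)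
  also have "\<dots> = (\<Sum>p\<in>{1..n}. \<Sum>q\<in>{p..<n}.
      smul (\<alpha> p q) (zcons (z p q) (smul ((-1) ^ p) (alt_sum c s s' (drop p (take q w))))))"
  proof (intro sum.cong refl)
    fix p q assume "p \<in> {1..n}" "q \<in> {p..<n}"
    hence "(\<Sum>k\<in>{p..q}. smul ((-1) ^ k) (h p q k)) = smul ((-1) ^ p) (alt_sum c s s' (drop p (take q w)))"
      unfolding h_def using alt_sum_segment[of p q w c s s'] by (simp add: n_def)
    thus "(\<Sum>k\<in>{p..q}. smul ((-1) ^ k) (smul (\<alpha> p q) (zcons (z p q) (h p q k))))
        = smul (\<alpha> p q) (zcons (z p q) (smul ((-1) ^ p) (alt_sum c s s' (drop p (take q w)))))"
      by (simp only: smul_zcons_sum)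
  qed
  also have "\<dots> = (\<Sum>p\<in>{1..n}. \<Sum>q\<in>{p..<n}. if q = p then
      smul ((-1) ^ p * s ^ (p - 1) * s' ^ (n - 1 - p)) (zcons (contract c w) empty_word) else 0)"
  proof (intro sum.cong refl)
    fix p q assume p: "p \<in> {1..n}" and q: "q \<in> {p..<n}"
    have "contract c w = zmul c (contract c (take p w)) (contract c (drop p w))"
      using p q nonempty contract_append[OF assoc, of "take p w" "drop p w"] by (simp add: n_def)
    hence "z p p = contract c w" by (simp add: z_def)
    moreover have "alt_sum c s s' (drop p (take q w)) = (if q = p then empty_word else 0)"
    proof -
      have "drop p (take q w) = [] \<longleftrightarrow> q = p" "length (drop p (take q w)) < length w"
        using p q by (auto simp: n_def)
      thus ?thesis using IH by simp
    qed
    ultimately show "smul (\<alpha> p q) (zcons (z p q) (smul ((-1) ^ p) (alt_sum c s s' (drop p (take q w)))))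
        = (if q = p then smul ((-1) ^ p * s ^ (p - 1) * s' ^ (n - 1 - p))
            (zcons (contract c w) empty_word) else 0)"
      by (simp add: \<alpha>_def zcons_smul mult_ac)
  qed
  also have "\<dots> = (\<Sum>p\<in>{1..n - 1}. smul ((-1) ^ p * s ^ (p - 1) * s' ^ (n - 1 - p))
      (zcons (contract c w) empty_word))"
    by (rule sum.mono_neutral_cong_right) auto
  finally show ?thesis
    by (simp add: n_def smul_sum_left)
qed

end

end

text \<open>The alternating sum vanishes on every nonempty word when s + s' = 1: the induction
  step reduces H(w) to gamma [w] 1, where gamma = 0 by alternating_power_sum.\<close>
lemma alt_sum_vanishes:
  fixes c :: "'a \<Rightarrow> 'a \<Rightarrow> ('a \<Rightarrow>\<^sub>0 'r::comm_ring_1)"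
  assumes comm: "\<And>a b. c a b = c b a"
    and assoc: "\<And>a b e. lin (\<lambda>d. c d e) (c a b) = lin (\<lambda>d. c a d) (c b e)"
    and complementary: "s + s' = 1"
  shows "alt_sum c s s' w = (if w = [] then empty_word else 0)"
proof (induction w rule: length_induct)
  case (1 w)
  show ?case
  proof (cases "w = []")
    case True
    thus ?thesis by (simp add: alt_sum_def harm_one_left)
  next
    case False
    define n where "n = length w"
    define gamma where "gamma = (-1) ^ n * s ^ (n - 1) + s' ^ (n - 1)
      + (\<Sum>p\<in>{1..n - 1}. (-1) ^ p * s ^ (p - 1) * s' ^ (n - 1 - p))"
    have IH: "alt_sum c s s' v = (if v = [] then empty_word else 0)" if "length v < length w" for v
      using 1 that by blast
    have "alt_sum c s s' w = (\<Sum>k\<in>{0..n}. smul ((-1) ^ k) (left_part c s s' w k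
        + right_part c s s' w k + mixed_part c s s' w k))"
      unfolding alt_sum_def n_def by (intro sum.cong refl) (simp add: harm_split[OF comm assoc False])
    also have "\<dots> = smul gamma (zcons (contract c w) empty_word)"
      by (simp add: smul_add sum.distrib smul_add_left gamma_def n_def
          left_part_sum[OF comm assoc False IH] right_part_sum[OF comm assoc False IH]
          mixed_part_sum[OF comm assoc False IH])
    also have "gamma = 0"
    proof -
      obtain m where n: "n = Suc m" using False by (cases w) (auto simp: n_def)
      have "gamma = (-1) ^ Suc m * s ^ m + (-s) ^ m"
        using alternating_power_sum[OF complementary, of m] by (simp add: gamma_def n)
      thus ?thesis by (simp add: power_minus[of s])
    qed
    finally show ?thesis using False by simp
  qed
qed

text \<open>The proposition is the case s = t, s' = 1 - t.\<close>
theorem proposition3p6: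
  fixes c :: "'a \<Rightarrow> 'a \<Rightarrow> ('a \<Rightarrow>\<^sub>0 'r::comm_ring_1)"
    and as :: "'a list"
  assumes Q_algebra: "\<forall>n::nat. n > 0 \<longrightarrow> (\<exists>x::'r. of_nat n * x = 1)"
    and comm: "\<And>a b. c a b = c b a"
    and assoc: "\<And>a b e. lin (\<lambda>d. c d e) (c a b) = lin (\<lambda>d. c a d) (c b e)"
    and n_pos: "length as \<ge> 1"
  shows "(\<Sum>k = 0..length as.
            smul ((-1) ^ k)
              (harm c (Sop c [:0, 1:] (take k as)) (Sop c [:1, -1:] (rev (drop k as))))) = 0"
proof -
  have "[:0, 1:] + [:1, -1:] = (1 :: 'r poly)"
    by (simp add: one_pCons)
  from alt_sum_vanishes[OF comm assoc this, of as] n_pos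
  show ?thesis by (auto simp: alt_sum_def)
qed

end
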